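(* Let $p$ be a prime and identify $(\mathbb Z/p\mathbb Z)^\infty=\bigoplus_{n\ge1}\mathbb Z/p\mathbb Z$ with the additive group of the polynomial ring $\mathbb F_p[t]$. Let $N\in\mathbb N$ and suppose there is a set $B\subseteq\mathbb F_p^N$ with $|B|>p^{N/2+1}$ containing no pattern of the form $\{y,\;y+(x_1,x_2,\dots,x_N),\;y+(0,x_1,x_2,\dots,x_{N-1})\}$ with $y\in\mathbb F_p^N$ and $(x_1,\dots,x_N)\ne0$. Then there is a measure-preserving system $(X,\mathcal B,\mu,(T_n)_{n\in\mathbb F_p[t]})$ and a set $A\in\mathcal B$ with $\mu(A)>0$ such that $$\mu(A\cap T_nA\cap T_{tn}A)\le\Big(\frac{p^{N/2+1}}{|B|}\Big)^2\mu(A)^3<\mu(A)^3$$ for all $n\ne0$.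
   Context: $T_{tn}$ denotes the action of the polynomial $tn\in\mathbb F_p[t]$; "nontrivial pattern" means $(x_1,\dots,x_N)\neq 0$. *)

theory Defs
  imports "HOL-Probability.Probability" "Berlekamp_Zassenhaus.Finite_Field"
begin

definition mp_map :: "'x measure \<Rightarrow> ('x \<Rightarrow> 'x) \<Rightarrow> bool" where
  "mp_map M f \<longleftrightarrow> f \<in> M \<rightarrow>\<^sub>M M \<and>
     (\<forall>A \<in> sets M. emeasure M (f -` A \<inter> space M) = emeasure M A)"

definition mps :: "'x measure \<Rightarrow> ('g::ab_group_add \<Rightarrow> 'x \<Rightarrow> 'x) \<Rightarrow> bool" where
  "mps M T \<longleftrightarrow> prob_space M \<and> (\<forall>n. mp_map M (T n)) \<and>
     (\<forall>x \<in> space M. T 0 x = x) \<and>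
     (\<forall>m n. \<forall>x \<in> space M. T (m + n) x = T m (T n x))"

definition shiftv :: "'a::zero list \<Rightarrow> 'a list" where
  "shiftv xs = (if xs = [] then [] else 0 # butlast xs)"

definition vadd :: "'a::plus list \<Rightarrow> 'a list \<Rightarrow> 'a list" where
  "vadd xs ys = map2 (+) xs ys"

definition pattern_free :: "nat \<Rightarrow> 'a::{zero,plus} list set \<Rightarrow> bool" where
  "pattern_free N B \<longleftrightarrow> (\<forall>y x. length y = N \<longrightarrow> length x = N \<longrightarrow> x \<noteq> replicate N 0 \<longrightarrow>
      \<not> (y \<in> B \<and> vadd y x \<in> B \<and> vadd y (shiftv x) \<in> B))"

end

theory Submission
  imports Defs
begin

(* Encode a point u of [0, q), q = p^(N+1), as a pair (x, \<omega>): the vector x = e \<lfloor>u\<rfloor> of F_p^(N+1)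
  and the sequence \<omega> of base-p digits of frac u.  Every \<omega> gives a linear form
  \<ell>(m) = \<Sum>i. coeff m i * \<omega> i on F_p[t], and n acts by the skew product
  (x, \<omega>) \<mapsto> (x + (\<ell>(t^N n), \<dots>, \<ell>(n)), \<omega>), which permutes the cells of a fine enough grid by
  translations and so preserves Lebesgue measure.  Take A = {(0 # y, \<omega>). y \<in> B}.  If u, T_n u and
  T_(t n) u lie in A, then multiplication by t shifts the cocycle, so B contains y, y + v and
  y + shiftv v for v = (\<ell>(t^(N-1) n), \<dots>, \<ell>(n)); hence v = 0, and all N + 1 values \<ell>(t^j n) vanish.
  For n \<noteq> 0 these are triangular linear conditions on consecutive digits of \<omega>, so they hold with
  probability p^-(N+1).  Thus \<mu>(A \<inter> T_n A \<inter> T_(t n) A) \<le> \<mu>(A) / q with \<mu>(A) = |B| / q, which is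
  at most (p^(N/2+1) / |B|)^2 \<mu>(A)^3.  The system is moved from the real line to sequences by the
  injection u \<mapsto> (\<lambda>_. u). *)

section \<open>Lebesgue measure of grid cells\<close>

lemma floor_cells_sets: "{u::real. \<lfloor>c * u\<rfloor> \<in> S} \<in> sets borel"
proof -
  have "(\<lambda>u::real. \<lfloor>c * u\<rfloor>) \<in> borel \<rightarrow>\<^sub>M count_space UNIV"
    by measurable
  from measurable_sets[OF this, of S] show ?thesis
    by (simp add: vimage_def)
qed

lemma emeasure_lborel_vimage_translate:
  fixes a :: real
  assumes "X \<in> sets borel"
  shows "emeasure lborel ((\<lambda>u. u + a) -` X) = emeasure lborel X"
proof -
  have "emeasure lborel X = emeasure (distr lborel borel ((+) a)) X"
    by (simp add: lborel_distr_plus)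
  also have "\<dots> = emeasure lborel ((+) a -` X)"
    using assms by (subst emeasure_distr) auto
  also have "(+) a = (\<lambda>u. u + a)"
    by (auto simp: add.commute)
  finally show ?thesis ..
qed

lemma emeasure_floor_cells:
  fixes c :: real
  assumes c: "c > 0" and S: "finite S"
  shows "emeasure lborel {u. \<lfloor>c * u\<rfloor> \<in> S} = ennreal (card S / c)"
proof -
  define I where "I m = {u::real. \<lfloor>c * u\<rfloor> = m}" for m
  have I_sets: "I m \<in> sets borel" for m
    using floor_cells_sets[of c "{m}"] by (simp add: I_def)
  have "I m = {of_int m / c ..< (of_int m + 1) / c}" for m
    unfolding I_def using c by (auto simp: floor_eq_iff field_simps)
  then have I_measure: "emeasure lborel (I m) = ennreal (1 / c)" for m
    using c by (simp add: divide_simps diff_divide_distrib[symmetric])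
  have "emeasure lborel {u. \<lfloor>c * u\<rfloor> \<in> S} = emeasure lborel (\<Union>m\<in>S. I m)"
    by (rule arg_cong[where f = "emeasure lborel"]) (auto simp: I_def)
  also have "\<dots> = (\<Sum>m\<in>S. emeasure lborel (I m))"
    by (rule sum_emeasure[symmetric]) (use I_sets S in \<open>auto simp: disjoint_family_on_def I_def\<close>)
  also have "\<dots> = ennreal (card S / c)"
    using c by (simp add: I_measure ennreal_of_nat_eq_real_of_nat ennreal_mult[symmetric])
  finally show ?thesis .
qed

lemma floor_mem_atLeastLessThan_iff: "\<lfloor>x\<rfloor> \<in> {0..<int k} \<longleftrightarrow> x \<in> {0..<real k}"
  by (simp add: floor_less_iff)

lemma emeasure_piecewise_translation:
  fixes c :: real and \<pi> :: "int \<Rightarrow> int"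
  assumes c: "c > 0" and W: "finite W" and \<pi>: "bij_betw \<pi> W W" and X: "X \<in> sets borel"
  shows "emeasure lborel {u. \<lfloor>c * u\<rfloor> \<in> W \<and> u + (\<pi> \<lfloor>c * u\<rfloor> - \<lfloor>c * u\<rfloor>) / c \<in> X}
       = emeasure lborel ({u. \<lfloor>c * u\<rfloor> \<in> W} \<inter> X)"
proof -
  define I where "I m = {u::real. \<lfloor>c * u\<rfloor> = m}" for m
  define s where "s m = real_of_int (\<pi> m - m) / c" for m
  have I_sets: "I m \<in> sets borel" for m
    using floor_cells_sets[of c "{m}"] by (simp add: I_def)
  have moved: "I m \<inter> {u. u + s m \<in> X} = (\<lambda>u. u + s m) -` (I (\<pi> m) \<inter> X)" for m
  proof -
    have "c * (u + s m) = c * u + of_int (\<pi> m - m)" for u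
      using c by (simp add: s_def field_simps)
    then show ?thesis
      by (auto simp: I_def)
  qed
  have moved_sets: "I m \<inter> {u. u + s m \<in> X} \<in> sets lborel" for m
  proof -
    have "(\<lambda>u. u + s m) \<in> borel_measurable borel"
      by simp
    from measurable_sets[OF this, of "I (\<pi> m) \<inter> X"] show ?thesis
      using I_sets X by (simp add: moved)
  qed
  have "{u. \<lfloor>c * u\<rfloor> \<in> W \<and> u + (\<pi> \<lfloor>c * u\<rfloor> - \<lfloor>c * u\<rfloor>) / c \<in> X} = (\<Union>m\<in>W. I m \<inter> {u. u + s m \<in> X})"
    by (auto simp: I_def s_def)
  also have "emeasure lborel \<dots> = (\<Sum>m\<in>W. emeasure lborel (I m \<inter> {u. u + s m \<in> X}))"
    by (rule sum_emeasure[symmetric]) (use moved_sets W in \<open>auto simp: disjoint_family_on_def I_def\<close>)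
  also have "\<dots> = (\<Sum>m\<in>W. emeasure lborel (I (\<pi> m) \<inter> X))"
    by (intro sum.cong refl, unfold moved, rule emeasure_lborel_vimage_translate) (use I_sets X in auto)
  also have "\<dots> = (\<Sum>m\<in>W. emeasure lborel (I m \<inter> X))"
    using sum.reindex_bij_betw[OF \<pi>, of "\<lambda>m. emeasure lborel (I m \<inter> X)"] by simp
  also have "\<dots> = emeasure lborel (\<Union>m\<in>W. I m \<inter> X)"
    by (rule sum_emeasure) (use I_sets X W in \<open>auto simp: disjoint_family_on_def I_def\<close>)
  also have "(\<Union>m\<in>W. I m \<inter> X) = {u. \<lfloor>c * u\<rfloor> \<in> W} \<inter> X"
    by (auto simp: I_def)
  finally show ?thesis .
qed

section \<open>Measure-preserving systems along injections\<close>

lemma embed_measure_vimage_image: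
  assumes f: "inj f" and T: "\<And>x. x \<in> space M \<Longrightarrow> T x \<in> space M"
  shows "(\<lambda>y. f (T (the_inv f y))) -` f ` X \<inter> space (embed_measure M f) = f ` (T -` X \<inter> space M)"
  using T by (auto simp: space_embed_measure the_inv_f_f[OF f] inj_image_mem_iff[OF f] dest: injD[OF f])

lemma measure_embed_measure_image:
  "inj f \<Longrightarrow> X \<in> sets M \<Longrightarrow> measure (embed_measure M f) (f ` X) = measure M X"
  by (simp add: measure_def emeasure_embed_measure_image)

lemma mps_embed_measure:
  assumes mps: "mps M T" and f: "inj f"
  shows "mps (embed_measure M f) (\<lambda>n y. f (T n (the_inv f y)))"
  unfolding mps_def mp_map_def
proof (intro conjI allI ballI)
  have T: "T n \<in> M \<rightarrow>\<^sub>M M"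
    and T_preserves: "\<And>X. X \<in> sets M \<Longrightarrow> emeasure M (T n -` X \<inter> space M) = emeasure M X"
    for n using mps by (auto simp: mps_def mp_map_def)
  have prob: "prob_space M"
    using mps by (simp add: mps_def)
  show "prob_space (embed_measure M f)"
    by (subst embed_measure_eq_distr[OF f]) (rule prob_space.prob_space_distr[OF prob measurable_embed_measure2[OF f]])
  fix n
  show "(\<lambda>y. f (T n (the_inv f y))) \<in> embed_measure M f \<rightarrow>\<^sub>M embed_measure M f"
    by (rule measurable_embed_measure1) (simp add: the_inv_f_f[OF f] measurable_compose[OF T measurable_embed_measure2[OF f]])
  fix Y assume "Y \<in> sets (embed_measure M f)"
  then obtain X where X: "X \<in> sets M" and Y: "Y = f ` X"
    by (auto simp: sets_embed_measure[OF f])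
  have "T n -` X \<inter> space M \<in> sets M"
    using measurable_sets[OF T X] .
  then show "emeasure (embed_measure M f) ((\<lambda>y. f (T n (the_inv f y))) -` Y \<inter> space (embed_measure M f))
      = emeasure (embed_measure M f) Y"
    using X measurable_space[OF T]
    by (simp add: Y embed_measure_vimage_image[OF f] emeasure_embed_measure_image[OF f] T_preserves)
next
  fix y assume "y \<in> space (embed_measure M f)"
  then show "f (T 0 (the_inv f y)) = y"
    using mps by (auto simp: space_embed_measure the_inv_f_f[OF f] mps_def)
next
  fix m n y assume "y \<in> space (embed_measure M f)"
  then show "f (T (m + n) (the_inv f y)) = f (T m (the_inv f (f (T n (the_inv f y)))))"
    using mps by (auto simp: space_embed_measure the_inv_f_f[OF f] mps_def)
qed

lemma measure_embed_measure_returns: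
  assumes mps: "mps M T" and f: "inj f" and A: "A \<in> sets M"
  defines "M' \<equiv> embed_measure M f" and "T' \<equiv> \<lambda>n y. f (T n (the_inv f y))"
  shows "measure M' (f ` A \<inter> (T' m -` f ` A \<inter> space M') \<inter> (T' n -` f ` A \<inter> space M'))
    = measure M (A \<inter> (T m -` A \<inter> space M) \<inter> (T n -` A \<inter> space M))"
proof -
  have T: "T k \<in> M \<rightarrow>\<^sub>M M" for k
    using mps by (simp add: mps_def mp_map_def)
  have "f ` A \<inter> (T' m -` f ` A \<inter> space M') \<inter> (T' n -` f ` A \<inter> space M')
      = f ` (A \<inter> (T m -` A \<inter> space M) \<inter> (T n -` A \<inter> space M))"
    using measurable_space[OF T]
    by (simp add: M'_def T'_def embed_measure_vimage_image[OF f] image_Int[OF f])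
  moreover have "A \<inter> (T m -` A \<inter> space M) \<inter> (T n -` A \<inter> space M) \<in> sets M"
    using A measurable_sets[OF T A] by blast
  ultimately show ?thesis
    by (simp add: M'_def measure_embed_measure_image[OF f])
qed

section \<open>Pairing polynomials with sequences\<close>

definition pairing :: "'a::comm_semiring_0 poly \<Rightarrow> (nat \<Rightarrow> 'a) \<Rightarrow> 'a" where
  "pairing m w = (\<Sum>i\<le>degree m. Polynomial.coeff m i * w i)"

lemma pairing_eq_sum:
  assumes "degree m < K"
  shows "pairing m w = (\<Sum>i<K. Polynomial.coeff m i * w i)"
  unfolding pairing_def
  by (rule sum.mono_neutral_left) (use assms in \<open>auto simp: coeff_eq_0\<close>)

lemma pairing_add: "pairing (a + b) w = pairing a w + pairing b w"
proof -
  define K where "K = Suc (max (degree a) (degree b))"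
  have "degree a < K" "degree b < K" "degree (a + b) < K"
    using degree_add_le_max[of a b] by (auto simp: K_def)
  then show ?thesis
    by (simp add: pairing_eq_sum sum.distrib distrib_right)
qed

lemma pairing_0 [simp]: "pairing 0 w = 0"
  by (simp add: pairing_def)

lemma pairing_cong: "(\<And>i. i \<le> degree m \<Longrightarrow> w i = w' i) \<Longrightarrow> pairing m w = pairing m w'"
  by (simp add: pairing_def)

lemma degree_monom_1_mult_le:
  fixes n :: "'a::comm_semiring_1 poly"
  shows "degree (Polynomial.monom 1 j * n) \<le> j + degree n"
  using degree_mult_le[of "Polynomial.monom 1 j" n] degree_monom_le[of "1::'a" j] by linarith

text \<open>The pairings of \<open>w\<close> with \<open>n, t n, \<dots>, t\<^sup>M\<^sup>-\<^sup>1 n\<close> form a triangular system in the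
  entries \<open>w (degree n), \<dots>, w (degree n + M - 1)\<close> whose diagonal is the leading coefficient of \<open>n\<close>.\<close>

lemma eq_below_if_pairings_vanish:
  fixes n :: "'a::idom poly"
  assumes n: "n \<noteq> 0" and below: "\<forall>i<degree n. w i = w' i"
    and w: "\<forall>j<M. pairing (Polynomial.monom 1 j * n) w = 0"
    and w': "\<forall>j<M. pairing (Polynomial.monom 1 j * n) w' = 0"
  shows "\<forall>i<degree n + M. w i = w' i"
  using w w'
proof (induction M)
  case 0
  then show ?case using below by simp
next
  case (Suc M)
  define d where "d = degree n"
  define m where "m = Polynomial.monom 1 M * n"
  have IH: "\<forall>i<d + M. w i = w' i"
    using Suc by (simp add: d_def)
  have split: "pairing m v = (\<Sum>i<d + M. Polynomial.coeff m i * v i) + lead_coeff n * v (d + M)" for v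
  proof -
    have "degree m < Suc (d + M)"
      using degree_monom_1_mult_le[of M n] by (simp add: m_def d_def)
    then show ?thesis
      by (simp add: pairing_eq_sum coeff_monom_mult m_def d_def)
  qed
  have "(\<Sum>i<d + M. Polynomial.coeff m i * w i) = (\<Sum>i<d + M. Polynomial.coeff m i * w' i)"
    using IH by simp
  moreover have "pairing m w = 0" "pairing m w' = 0"
    using Suc.prems by (simp_all add: m_def)
  ultimately have "lead_coeff n * w (d + M) = lead_coeff n * w' (d + M)"
    unfolding split by (metis add_left_cancel)
  then have "w (d + M) = w' (d + M)"
    using n by simp
  then show ?case
    using IH by (auto simp: d_def less_Suc_eq)
qed

section \<open>Base-\<open>p\<close> digits of reals\<close>

definition digits :: "nat \<Rightarrow> real \<Rightarrow> nat \<Rightarrow> 'a::ring_1" where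
  "digits p u i = of_int (\<lfloor>real p ^ Suc i * u\<rfloor> mod int p)"

definition cell_digits :: "nat \<Rightarrow> nat \<Rightarrow> int \<Rightarrow> nat \<Rightarrow> 'a::ring_1" where
  "cell_digits p L m i = of_int ((m div int p ^ (L - 1 - i)) mod int p)"

lemma floor_eq_cell_div: "p > 0 \<Longrightarrow> \<lfloor>u\<rfloor> = \<lfloor>real p ^ L * u\<rfloor> div int p ^ L"
  using floor_divide_real_eq_div[of "int p ^ L" "real p ^ L * u"] by simp

lemma digits_eq_cell_digits:
  assumes p: "p > 0" and i: "i < L"
  shows "digits p u i = cell_digits p L \<lfloor>real p ^ L * u\<rfloor> i"
proof -
  have "Suc i + (L - 1 - i) = L"
    using i by simp
  then have "real p ^ L = real p ^ Suc i * real p ^ (L - 1 - i)"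
    by (metis power_add)
  then have "real p ^ Suc i * u = real p ^ L * u / real_of_int (int p ^ (L - 1 - i))"
    using p by simp
  then show ?thesis
    unfolding digits_def cell_digits_def
    using floor_divide_real_eq_div[of "int p ^ (L - 1 - i)" "real p ^ L * u"] by simp
qed

lemma digits_add_of_int: "digits p (u + of_int z) = digits p u"
proof
  fix i
  have "real p ^ Suc i * (u + of_int z) = real p ^ Suc i * u + of_int (int p * (int p ^ i * z))"
    by (simp add: distrib_left mult.assoc)
  then have "\<lfloor>real p ^ Suc i * (u + of_int z)\<rfloor> = \<lfloor>real p ^ Suc i * u\<rfloor> + int p * (int p ^ i * z)"
    by (simp only: floor_add_int[symmetric])
  then show "digits p (u + of_int z) i = digits p u i"
    by (simp only: digits_def mod_mult_self2)
qed

lemma int_eq_if_digits_eq: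
  fixes b :: int
  assumes "b > 0"
  shows "m div b ^ K = m' div b ^ K \<Longrightarrow> \<forall>r<K. m div b ^ r mod b = m' div b ^ r mod b \<Longrightarrow> m = m'"
proof (induction K arbitrary: m m')
  case 0
  then show ?case by simp
next
  case (Suc K)
  have div_Suc: "x div b ^ Suc r = x div b div b ^ r" for x r
  proof -
    have "0 \<le> b ^ r"
      using assms by simp
    then show ?thesis
      by (simp only: power_Suc zdiv_zmult2_eq)
  qed
  have "m div b = m' div b"
  proof (rule Suc.IH)
    show "m div b div b ^ K = m' div b div b ^ K"
      using Suc.prems(1) by (simp only: div_Suc[symmetric])
    show "\<forall>r<K. m div b div b ^ r mod b = m' div b div b ^ r mod b"
    proof (intro allI impI)
      fix r assume "r < K"
      then have "m div b ^ Suc r mod b = m' div b ^ Suc r mod b"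
        using Suc.prems(2) by blast
      then show "m div b div b ^ r mod b = m' div b div b ^ r mod b"
        by (simp only: div_Suc)
    qed
  qed
  moreover have "m mod b = m' mod b"
    using Suc.prems(2) by (metis div_by_1 power_0 zero_less_Suc)
  ultimately show ?case
    by (metis div_mult_mod_eq)
qed

lemma card_div_preimage:
  fixes Q :: int and K :: "int set"
  assumes Q: "Q > 0" and K: "finite K"
  shows "finite {z. z div Q \<in> K}" and "card {z. z div Q \<in> K} = card K * nat Q"
proof -
  have bij: "bij_betw (\<lambda>(k, r). k * Q + r) (K \<times> {0..<Q}) {z. z div Q \<in> K}"
    by (rule bij_betw_byWitness[where f' = "\<lambda>z. (z div Q, z mod Q)"]) (use Q in auto)
  show "finite {z. z div Q \<in> K}"
    using bij_betw_finite[OF bij] K by simp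
  show "card {z. z div Q \<in> K} = card K * nat Q"
    using bij_betw_same_card[OF bij] by (simp add: card_cartesian_product)
qed

definition vanishing_cells :: "nat \<Rightarrow> nat \<Rightarrow> 'a::comm_ring_1 poly \<Rightarrow> int set \<Rightarrow> int set" where
  "vanishing_cells p M n K = {m. m div int p ^ (degree n + M) \<in> K \<and>
     (\<forall>j<M. pairing (Polynomial.monom 1 j * n) (cell_digits p (degree n + M) m) = 0)}"

lemma inj_on_div_vanishing_cells:
  fixes n :: "'a::idom poly"
  assumes p: "p > 0" and of_int_inj: "inj_on (of_int :: int \<Rightarrow> 'a) {0..<int p}" and n: "n \<noteq> 0"
  shows "inj_on (\<lambda>m. m div int p ^ M) (vanishing_cells p M n K)"
proof (rule inj_onI, clarsimp simp: vanishing_cells_def)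
  fix m m' :: int
  define L where "L = degree n + M"
  assume "\<forall>j<M. pairing (Polynomial.monom 1 j * n) (cell_digits p (degree n + M) m :: nat \<Rightarrow> 'a) = 0"
    and "\<forall>j<M. pairing (Polynomial.monom 1 j * n) (cell_digits p (degree n + M) m' :: nat \<Rightarrow> 'a) = 0"
    and top: "m div int p ^ M = m' div int p ^ M"
  moreover have "\<forall>i<degree n. (cell_digits p L m i :: 'a) = cell_digits p L m' i"
  proof (intro allI impI)
    fix i assume "i < degree n"
    then have "L - 1 - i = M + (degree n - 1 - i)"
      by (simp add: L_def)
    then have "int p ^ (L - 1 - i) = int p ^ M * int p ^ (degree n - 1 - i)"
      by (simp add: power_add)
    then show "(cell_digits p L m i :: 'a) = cell_digits p L m' i"
      using top by (simp add: cell_digits_def zdiv_zmult2_eq)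
  qed
  ultimately have all: "\<forall>i<L. (cell_digits p L m i :: 'a) = cell_digits p L m' i"
    using eq_below_if_pairings_vanish[OF n] by (simp add: L_def)
  have digits: "\<forall>r<M. m div int p ^ r mod int p = m' div int p ^ r mod int p"
  proof (intro allI impI)
    fix r assume r: "r < M"
    have "(cell_digits p L m (L - 1 - r) :: 'a) = cell_digits p L m' (L - 1 - r)"
      using all r by (simp add: L_def)
    moreover have "L - 1 - (L - 1 - r) = r"
      using r by (simp add: L_def)
    ultimately show "m div int p ^ r mod int p = m' div int p ^ r mod int p"
      using inj_onD[OF of_int_inj] p by (simp add: cell_digits_def)
  qed
  show "m = m'"
    by (rule int_eq_if_digits_eq[where b = "int p" and K = M]) (use p top digits in simp_all)
qed

lemma card_vanishing_cells_le:
  fixes n :: "'a::idom poly"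
  assumes p: "p > 0" and of_int_inj: "inj_on (of_int :: int \<Rightarrow> 'a) {0..<int p}"
    and n: "n \<noteq> 0" and K: "finite K"
  shows "finite (vanishing_cells p M n K)" and "card (vanishing_cells p M n K) \<le> card K * p ^ degree n"
proof -
  note inj = inj_on_div_vanishing_cells[OF p of_int_inj n, of M K]
  have image: "(\<lambda>m. m div int p ^ M) ` vanishing_cells p M n K \<subseteq> {z. z div int p ^ degree n \<in> K}"
    using p by (auto simp: vanishing_cells_def zdiv_zmult2_eq power_add mult.commute)
  note preimage = card_div_preimage[of "int p ^ degree n", OF _ K]
  show "finite (vanishing_cells p M n K)" "card (vanishing_cells p M n K) \<le> card K * p ^ degree n"
    using inj_on_finite[OF inj image] card_inj_on_le[OF inj image] preimage p
    by (simp_all add: nat_power_eq)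
qed

lemma vanishing_pairings_subset_cells:
  fixes n :: "'a::comm_ring_1 poly"
  assumes p: "p > 0"
  shows "{u. \<lfloor>u\<rfloor> \<in> K \<and> (\<forall>j<M. pairing (Polynomial.monom 1 j * n) (digits p u) = 0)}
    \<subseteq> {u. \<lfloor>real p ^ (degree n + M) * u\<rfloor> \<in> vanishing_cells p M n K}"
proof safe
  fix u :: real
  define L where "L = degree n + M"
  assume "\<lfloor>u\<rfloor> \<in> K" and vanish: "\<forall>j<M. pairing (Polynomial.monom 1 j * n) (digits p u) = 0"
  then have "\<lfloor>real p ^ L * u\<rfloor> div int p ^ L \<in> K"
    using floor_eq_cell_div[OF p, of u L] by simp
  moreover have "pairing (Polynomial.monom 1 j * n) (cell_digits p L \<lfloor>real p ^ L * u\<rfloor>) = 0" if "j < M" for j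
  proof -
    have "pairing (Polynomial.monom 1 j * n) (cell_digits p L \<lfloor>real p ^ L * u\<rfloor>)
        = pairing (Polynomial.monom 1 j * n) (digits p u)"
    proof (rule pairing_cong)
      fix i assume "i \<le> degree (Polynomial.monom 1 j * n)"
      then have "i < L"
        using degree_monom_1_mult_le[of j n] \<open>j < M\<close> by (simp add: L_def)
      then show "cell_digits p L \<lfloor>real p ^ L * u\<rfloor> i = digits p u i"
        by (simp add: digits_eq_cell_digits[OF p])
    qed
    then show ?thesis
      using vanish \<open>j < M\<close> by simp
  qed
  ultimately show "\<lfloor>real p ^ (degree n + M) * u\<rfloor> \<in> vanishing_cells p M n K"
    by (simp add: vanishing_cells_def L_def)
qed

lemma emeasure_vanishing_pairings_le:
  fixes n :: "'a::idom poly" and K :: "int set"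
  assumes p: "p > 0" and of_int_inj: "inj_on (of_int :: int \<Rightarrow> 'a) {0..<int p}"
    and n: "n \<noteq> 0" and K: "finite K"
    and X: "X \<subseteq> {u. \<lfloor>u\<rfloor> \<in> K \<and> (\<forall>j<M. pairing (Polynomial.monom 1 j * n) (digits p u :: nat \<Rightarrow> 'a) = 0)}"
  shows "emeasure lborel X \<le> ennreal (card K / real p ^ M)"
proof -
  define c where "c = real p ^ (degree n + M)"
  define S where "S = vanishing_cells p M n K"
  have c: "c > 0"
    using p by (simp add: c_def)
  note S = card_vanishing_cells_le[OF p of_int_inj n K, of M, folded S_def]
  have "emeasure lborel X \<le> emeasure lborel {u. \<lfloor>c * u\<rfloor> \<in> S}"
    using X vanishing_pairings_subset_cells[OF p, of K M n]
    by (intro emeasure_mono) (auto simp: floor_cells_sets c_def S_def)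
  also have "\<dots> = ennreal (card S / c)"
    using emeasure_floor_cells[OF c S(1)] .
  also have "\<dots> \<le> ennreal (card K / real p ^ M)"
  proof (rule ennreal_leI)
    have "real (card S) \<le> card K * real p ^ degree n"
      using S(2) by (simp flip: of_nat_power of_nat_mult)
    then have "card S / c \<le> card K * real p ^ degree n / c"
      using c by (simp add: divide_right_mono)
    also have "\<dots> = card K / real p ^ M"
      using p by (simp add: c_def power_add)
    finally show "card S / c \<le> card K / real p ^ M" .
  qed
  finally show ?thesis .
qed

section \<open>The skew product\<close>

definition cocycle :: "nat \<Rightarrow> nat \<Rightarrow> real \<Rightarrow> 'a::comm_ring_1 poly \<Rightarrow> 'a list" where
  "cocycle p N u n = rev (map (\<lambda>j. pairing (Polynomial.monom 1 j * n) (digits p u)) [0..<Suc N])"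

lemma length_vadd [simp]: "length (vadd xs ys) = min (length xs) (length ys)"
  by (simp add: vadd_def)

lemma nth_vadd: "i < length xs \<Longrightarrow> i < length ys \<Longrightarrow> vadd xs ys ! i = xs ! i + ys ! i"
  by (simp add: vadd_def)

lemma vadd_Cons: "vadd (a # xs) (b # ys) = (a + b) # vadd xs ys"
  by (simp add: vadd_def)

lemma vadd_assoc:
  fixes xs :: "'a::semigroup_add list"
  shows "vadd (vadd xs ys) zs = vadd xs (vadd ys zs)"
  by (rule nth_equalityI) (simp_all add: nth_vadd add.assoc)

lemma vadd_commute:
  fixes xs :: "'a::ab_semigroup_add list"
  shows "vadd xs ys = vadd ys xs"
  by (rule nth_equalityI) (simp_all add: nth_vadd add.commute)

lemma vadd_replicate_0:
  fixes xs :: "'a::monoid_add list"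
  shows "length xs = n \<Longrightarrow> vadd xs (replicate n 0) = xs"
  by (rule nth_equalityI) (simp_all add: nth_vadd)

lemma butlast_Cons_0: "butlast (0 # xs) = shiftv xs"
  by (simp add: shiftv_def)

lemma length_cocycle [simp]: "length (cocycle p N u n) = Suc N"
  by (simp add: cocycle_def)

lemma cocycle_add: "cocycle p N u (m + n) = vadd (cocycle p N u m) (cocycle p N u n)"
proof -
  have "vadd (map f xs) (map g xs) = map (\<lambda>x. f x + g x) xs" for f g :: "nat \<Rightarrow> 'a" and xs
    by (induction xs) (simp_all add: vadd_def)
  then show ?thesis
    by (simp add: cocycle_def vadd_def zip_rev distrib_left pairing_add flip: rev_map)
qed

lemma cocycle_0: "cocycle p N u 0 = replicate (Suc N) 0"
  by (simp add: cocycle_def map_replicate_const replicate_append_same)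

lemma cocycle_add_of_int: "cocycle p N (u + of_int z) n = cocycle p N u n"
  by (simp add: cocycle_def digits_add_of_int)

lemma cocycle_cell_cong:
  assumes p: "p > 0" and L: "degree n + Suc N \<le> L" and cell: "\<lfloor>real p ^ L * u\<rfloor> = \<lfloor>real p ^ L * u'\<rfloor>"
  shows "cocycle p N u n = cocycle p N u' n"
  unfolding cocycle_def
proof (intro arg_cong[where f = rev] map_cong refl pairing_cong)
  fix j i assume "j \<in> set [0..<Suc N]" and "i \<le> degree (Polynomial.monom 1 j * n)"
  moreover have "degree (Polynomial.monom 1 j * n) \<le> j + degree n"
    by (rule degree_monom_1_mult_le)
  moreover have "j < Suc N"
    using \<open>j \<in> set [0..<Suc N]\<close> by (simp del: upt_Suc)
  ultimately have "i < L"
    using L by linarith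
  then show "digits p u i = digits p u' i"
    using cell by (simp add: digits_eq_cell_digits[OF p])
qed

lemma cocycle_mult_X:
  "cocycle p N u ([:0, 1:] * n) = pairing (Polynomial.monom 1 (Suc N) * n) (digits p u) # butlast (cocycle p N u n)"
proof -
  define f where "f j = pairing (Polynomial.monom 1 j * n) (digits p u :: nat \<Rightarrow> 'a)" for j
  have "Polynomial.monom 1 j * ([:0, 1:] * n) = Polynomial.monom 1 (Suc j) * n" for j :: nat
    by (simp add: x_as_monom mult_monom flip: mult.assoc)
  then have "cocycle p N u ([:0, 1:] * n) = rev (map f (map Suc [0..<Suc N]))"
    by (simp add: cocycle_def f_def del: upt_Suc)
  also have "\<dots> = f (Suc N) # rev (map f [1..<Suc N])"
    by (simp only: map_Suc_upt) simp
  also have "rev (map f [1..<Suc N]) = butlast (cocycle p N u n)"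
    by (simp add: cocycle_def f_def butlast_rev upt_conv_Cons del: upt_Suc)
  finally show ?thesis
    by (simp add: f_def)
qed

lemma cocycle_eq_0_imp:
  assumes "cocycle p N u n = replicate (Suc N) 0" and "j < Suc N"
  shows "pairing (Polynomial.monom 1 j * n) (digits p u) = 0"
proof -
  have "map (\<lambda>j. pairing (Polynomial.monom 1 j * n) (digits p u)) [0..<Suc N] = replicate (Suc N) 0"
    using arg_cong[OF assms(1), of rev] by (simp add: cocycle_def replicate_append_same del: upt_Suc)
  then have "map (\<lambda>j. pairing (Polynomial.monom 1 j * n) (digits p u)) [0..<Suc N] ! j = replicate (Suc N) 0 ! j"
    by (rule arg_cong)
  then show ?thesis
    using assms(2) by (simp del: upt_Suc replicate_Suc)
qed

text \<open>A point \<open>u \<in> [0, q)\<close> stands for the pair \<open>(e \<lfloor>u\<rfloor>, digits p u)\<close>, and \<open>skew n\<close> is the skew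
  product \<open>(x, \<omega>) \<mapsto> (x + cocycle \<omega> n, \<omega>)\<close>; outside \<open>[0, q)\<close> it is the identity.\<close>

locale digit_skew_product =
  fixes p N q :: nat and e :: "nat \<Rightarrow> 'a::comm_ring_1 list"
  assumes p_gt_1: "p > 1"
    and e_bij: "bij_betw e {0..<q} {xs. length xs = Suc N}"
begin

definition skew :: "'a poly \<Rightarrow> real \<Rightarrow> real" where
  "skew n u = (if u \<in> {0..<real q}
     then frac u + real (inv_into {0..<q} e (vadd (e (nat \<lfloor>u\<rfloor>)) (cocycle p N u n)))
     else u)"

definition cylinder :: "'a list set \<Rightarrow> real set" where
  "cylinder D = {u \<in> {0..<real q}. e (nat \<lfloor>u\<rfloor>) \<in> D}"

definition skew_space :: "real measure" where
  "skew_space = uniform_measure lborel {0..<real q}"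

lemma q_pos: "q > 0"
proof -
  have "replicate (Suc N) 0 \<in> e ` {0..<q}"
    using e_bij by (simp add: bij_betw_def)
  then show ?thesis
    by (cases q) auto
qed

lemma in_range_iff_floor: "u \<in> {0..<real q} \<longleftrightarrow> \<lfloor>u\<rfloor> \<in> {0..<int q}"
  by (rule floor_mem_atLeastLessThan_iff[symmetric])

lemma in_range_iff_cell: "u \<in> {0..<real q} \<longleftrightarrow> \<lfloor>real p ^ L * u\<rfloor> \<in> {0..<int (p ^ L * q)}"
proof -
  have c: "real p ^ L > 0"
    using p_gt_1 by simp
  have "0 \<le> real p ^ L * u \<longleftrightarrow> 0 \<le> u"
    using mult_le_cancel_left_pos[OF c, of 0 u] by simp
  moreover have "real p ^ L * u < real (p ^ L * q) \<longleftrightarrow> u < real q"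
    using mult_less_cancel_left_pos[OF c, of u "real q"] by simp
  ultimately show ?thesis
    unfolding floor_mem_atLeastLessThan_iff by simp
qed

lemma floor_index: "u \<in> {0..<real q} \<Longrightarrow> nat \<lfloor>u\<rfloor> \<in> {0..<q}"
  by (auto simp: nat_less_iff floor_less_iff)

lemma length_e_floor:
  assumes "u \<in> {0..<real q}"
  shows "length (e (nat \<lfloor>u\<rfloor>)) = Suc N"
proof -
  have "e (nat \<lfloor>u\<rfloor>) \<in> e ` {0..<q}"
    using floor_index[OF assms] by blast
  then show ?thesis
    using e_bij by (simp add: bij_betw_def)
qed

lemma skew_outside: "u \<notin> {0..<real q} \<Longrightarrow> skew n u = u"
  by (auto simp: skew_def)

lemma skew_in_range:
  assumes u: "u \<in> {0..<real q}"
  shows "skew n u \<in> {0..<real q}" and "frac (skew n u) = frac u"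
    and "e (nat \<lfloor>skew n u\<rfloor>) = vadd (e (nat \<lfloor>u\<rfloor>)) (cocycle p N u n)"
proof -
  define x where "x = vadd (e (nat \<lfloor>u\<rfloor>)) (cocycle p N u n)"
  have x: "x \<in> e ` {0..<q}"
    using e_bij length_e_floor[OF u] by (simp add: bij_betw_def x_def)
  define k where "k = inv_into {0..<q} e x"
  have k: "k < q" "e k = x"
    using inv_into_into[OF x] f_inv_into_f[OF x] by (simp_all add: k_def)
  have skew: "skew n u = frac u + of_int (int k)"
    using u by (simp add: skew_def x_def k_def)
  have floor: "\<lfloor>skew n u\<rfloor> = int k"
    by (simp add: skew flip: floor_add_int)
  show "skew n u \<in> {0..<real q}"
    unfolding in_range_iff_floor floor using k(1) by simp
  show "frac (skew n u) = frac u"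
    by (simp only: skew frac_add_of_int_right frac_frac)
  show "e (nat \<lfloor>skew n u\<rfloor>) = x"
    using k by (simp add: floor)
qed

lemma range_eqI:
  assumes "x \<in> {0..<real q}" "y \<in> {0..<real q}" "frac x = frac y" "e (nat \<lfloor>x\<rfloor>) = e (nat \<lfloor>y\<rfloor>)"
  shows "x = y"
proof -
  have "nat \<lfloor>x\<rfloor> = nat \<lfloor>y\<rfloor>"
    using e_bij assms(4) floor_index[OF assms(1)] floor_index[OF assms(2)] by (auto simp: bij_betw_def dest: inj_onD)
  then have "\<lfloor>x\<rfloor> = \<lfloor>y\<rfloor>"
    using assms(1,2) by (simp add: eq_nat_nat_iff)
  then show ?thesis
    using assms(3) by (simp add: frac_def)
qed

lemma skew_eq_add_of_int: "\<exists>z. skew n u = u + of_int z"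
proof (cases "u \<in> {0..<real q}")
  case True
  have "skew n u = u + of_int (\<lfloor>skew n u\<rfloor> - \<lfloor>u\<rfloor>)"
    using skew_in_range(2)[OF True, of n] unfolding frac_def of_int_diff by linarith
  then show ?thesis ..
qed (auto simp: skew_outside intro: exI[of _ 0])

lemma cocycle_skew: "cocycle p N (skew n u) m = cocycle p N u m"
  using skew_eq_add_of_int[of n u] by (auto simp: cocycle_add_of_int)

lemma skew_0: "skew 0 u = u"
proof (cases "u \<in> {0..<real q}")
  case True
  have "e (nat \<lfloor>skew 0 u\<rfloor>) = e (nat \<lfloor>u\<rfloor>)"
    using skew_in_range(3)[OF True, of 0] length_e_floor[OF True]
    by (simp add: cocycle_0 vadd_replicate_0 del: replicate_Suc)
  then show ?thesis
    using range_eqI[OF skew_in_range(1)[OF True] True skew_in_range(2)[OF True]] by blast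
qed (simp add: skew_outside)

lemma skew_add: "skew (m + n) u = skew m (skew n u)"
proof (cases "u \<in> {0..<real q}")
  case True
  have n: "skew n u \<in> {0..<real q}"
    by (rule skew_in_range(1)[OF True])
  show ?thesis
  proof (rule range_eqI[OF skew_in_range(1)[OF True] skew_in_range(1)[OF n]])
    show "frac (skew (m + n) u) = frac (skew m (skew n u))"
      using skew_in_range(2)[OF True] skew_in_range(2)[OF n] by simp
    have "e (nat \<lfloor>skew m (skew n u)\<rfloor>) = vadd (vadd (e (nat \<lfloor>u\<rfloor>)) (cocycle p N u n)) (cocycle p N u m)"
      using skew_in_range(3)[OF n, of m] skew_in_range(3)[OF True, of n] by (simp add: cocycle_skew)
    also have "\<dots> = vadd (e (nat \<lfloor>u\<rfloor>)) (cocycle p N u (m + n))"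
      by (simp add: cocycle_add vadd_assoc vadd_commute[of "cocycle p N u n"])
    finally show "e (nat \<lfloor>skew (m + n) u\<rfloor>) = e (nat \<lfloor>skew m (skew n u)\<rfloor>)"
      using skew_in_range(3)[OF True, of "m + n"] by simp
  qed
qed (simp add: skew_outside)

lemma skew_cell_cong:
  assumes L: "degree n + Suc N \<le> L" and cell: "\<lfloor>real p ^ L * u\<rfloor> = \<lfloor>real p ^ L * u'\<rfloor>"
  shows "skew n u - u = skew n u' - u'"
proof -
  have p: "p > 0"
    using p_gt_1 by simp
  have "\<lfloor>u\<rfloor> = \<lfloor>u'\<rfloor>"
    using cell floor_eq_cell_div[OF p, of u L] floor_eq_cell_div[OF p, of u' L] by simp
  moreover have "cocycle p N u n = cocycle p N u' n"
    by (rule cocycle_cell_cong[OF p L cell])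
  moreover from calculation(1) have range: "u \<in> {0..<real q} \<longleftrightarrow> u' \<in> {0..<real q}"
    by (simp only: in_range_iff_floor)
  ultimately show ?thesis
  proof (cases "u \<in> {0..<real q}")
    case True
    moreover have "u' \<in> {0..<real q}"
      using True range by blast
    ultimately show ?thesis
      using \<open>\<lfloor>u\<rfloor> = \<lfloor>u'\<rfloor>\<close> \<open>cocycle p N u n = cocycle p N u' n\<close> by (simp add: skew_def frac_def)
  next
    case False
    moreover have "u' \<notin> {0..<real q}"
      using False range by blast
    ultimately show ?thesis
      by (simp add: skew_outside)
  qed
qed

lemma skew_grid_point:
  fixes L :: nat and m :: int
  defines "c \<equiv> real p ^ L"
  shows "of_int \<lfloor>c * skew n (of_int m / c)\<rfloor> / c = skew n (of_int m / c)"
proof -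
  obtain z where z: "skew n (of_int m / c) = of_int m / c + of_int z"
    using skew_eq_add_of_int by blast
  have c: "c > 0"
    using p_gt_1 by (simp add: c_def)
  then have "c * skew n (of_int m / c) = of_int m + c * of_int z"
    by (simp add: z distrib_left)
  also have "c * of_int z = of_int (int p ^ L * z)"
    by (simp add: c_def)
  finally have "c * skew n (of_int m / c) = of_int (m + int p ^ L * z)"
    by simp
  then have "of_int \<lfloor>c * skew n (of_int m / c)\<rfloor> = c * skew n (of_int m / c)"
    by (metis floor_of_int)
  then show ?thesis
    using c by (metis less_irrefl nonzero_mult_div_cancel_left)
qed

lemma skew_piecewise_translation:
  assumes L: "degree n + Suc N \<le> L"
  defines "c \<equiv> real p ^ L"
  shows "skew n u = u + (\<lfloor>c * skew n (of_int \<lfloor>c * u\<rfloor> / c)\<rfloor> - \<lfloor>c * u\<rfloor>) / c"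
proof -
  define m where "m = \<lfloor>c * u\<rfloor>"
  have c: "c > 0"
    using p_gt_1 by (simp add: c_def)
  have "skew n u - u = skew n (of_int m / c) - of_int m / c"
    by (rule skew_cell_cong[OF L]) (use c in \<open>simp add: m_def c_def\<close>)
  also have "\<dots> = (\<lfloor>c * skew n (of_int m / c)\<rfloor> - m) / c"
    using skew_grid_point[where L = L and m = m and n = n, folded c_def] by (simp add: diff_divide_distrib)
  finally show ?thesis
    by (simp add: m_def algebra_simps)
qed

lemma skew_grid_bij:
  fixes L :: nat
  defines "c \<equiv> real p ^ L" and "W \<equiv> {0..<int (p ^ L * q)}"
  shows "bij_betw (\<lambda>m. \<lfloor>c * skew n (of_int m / c)\<rfloor>) W W"
proof -
  define \<pi> where "\<pi> n' m = \<lfloor>c * skew n' (of_int m / c)\<rfloor>" for n' m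
  have c: "c > 0"
    using p_gt_1 by (simp add: c_def)
  have grid: "of_int (\<pi> n' m) / c = skew n' (of_int m / c)" for n' m
    using skew_grid_point[where L = L and m = m and n = n', folded c_def] by (simp add: \<pi>_def)
  have range: "u \<in> {0..<real q} \<longleftrightarrow> \<lfloor>c * u\<rfloor> \<in> W" for u
    unfolding c_def W_def by (rule in_range_iff_cell)
  have into: "\<pi> n ` W \<subseteq> W"
  proof safe
    fix m assume "m \<in> W"
    then have "\<lfloor>c * (of_int m / c)\<rfloor> \<in> W"
      using c by simp
    then have "of_int m / c \<in> {0..<real q}"
      using range by blast
    from range[THEN iffD1, OF skew_in_range(1)[OF this]] show "\<pi> n m \<in> W"
      by (simp add: \<pi>_def)
  qed
  have "\<pi> (- n) (\<pi> n m) = m" for m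
  proof -
    have "\<pi> (- n) (\<pi> n m) = \<lfloor>c * skew (- n) (of_int (\<pi> n m) / c)\<rfloor>"
      by (simp only: \<pi>_def[of "- n"])
    also have "\<dots> = \<lfloor>c * skew (- n) (skew n (of_int m / c))\<rfloor>"
      by (simp only: grid)
    finally show ?thesis
      using c by (simp add: skew_0 flip: skew_add)
  qed
  then have "inj_on (\<pi> n) W"
    by (metis inj_on_inverseI)
  then have "bij_betw (\<pi> n) W W"
    using endo_inj_surj[OF _ into] by (simp add: bij_betw_def W_def)
  moreover have "\<pi> n = (\<lambda>m. \<lfloor>c * skew n (of_int m / c)\<rfloor>)"
    by (rule ext) (simp only: \<pi>_def)
  ultimately show ?thesis
    by (simp only:)
qed

lemma skew_measurable: "skew n \<in> borel_measurable borel"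
proof -
  define L where "L = degree n + Suc N"
  define c where "c = real p ^ L"
  define \<pi> where "\<pi> = (\<lambda>m. \<lfloor>c * skew n (of_int m / c)\<rfloor>)"
  have skew: "skew n = (\<lambda>u. u + (\<pi> \<lfloor>c * u\<rfloor> - \<lfloor>c * u\<rfloor>) / c)"
    unfolding \<pi>_def c_def by (intro ext skew_piecewise_translation) (simp add: L_def)
  have cell: "(\<lambda>u. \<lfloor>c * u\<rfloor>) \<in> borel \<rightarrow>\<^sub>M count_space UNIV"
    by measurable
  have "(\<lambda>u. (\<lambda>m u. u + (\<pi> m - m) / c) \<lfloor>c * u\<rfloor> u) \<in> borel_measurable borel"
    by (rule measurable_compose_countable[OF _ cell]) simp
  then show ?thesis
    by (simp add: skew)
qed

lemma emeasure_skew_vimage: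
  assumes X: "X \<in> sets borel"
  shows "emeasure lborel ({u. skew n u \<in> X} \<inter> {0..<real q}) = emeasure lborel (X \<inter> {0..<real q})"
proof -
  define L where "L = degree n + Suc N"
  define c where "c = real p ^ L"
  define W where "W = {0..<int (p ^ L * q)}"
  have range: "{0..<real q} = {u. \<lfloor>c * u\<rfloor> \<in> W}"
    unfolding c_def W_def using in_range_iff_cell[of _ L] by blast
  define \<pi> where "\<pi> = (\<lambda>m. \<lfloor>c * skew n (of_int m / c)\<rfloor>)"
  have skew: "skew n = (\<lambda>u. u + (\<pi> \<lfloor>c * u\<rfloor> - \<lfloor>c * u\<rfloor>) / c)"
    unfolding \<pi>_def c_def by (intro ext skew_piecewise_translation) (simp add: L_def)
  have bij: "bij_betw \<pi> W W"
    unfolding \<pi>_def c_def W_def by (rule skew_grid_bij)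
  have "{u. skew n u \<in> X} \<inter> {0..<real q} = {u. \<lfloor>c * u\<rfloor> \<in> W \<and> u + (\<pi> \<lfloor>c * u\<rfloor> - \<lfloor>c * u\<rfloor>) / c \<in> X}"
    by (auto simp: skew range)
  also have "emeasure lborel \<dots> = emeasure lborel ({u. \<lfloor>c * u\<rfloor> \<in> W} \<inter> X)"
    using p_gt_1 by (intro emeasure_piecewise_translation[OF _ _ bij X]) (simp_all add: c_def W_def)
  finally show ?thesis
    by (simp add: range Int_commute)
qed

lemma prob_space_skew_space: "prob_space skew_space"
  unfolding skew_space_def using q_pos by (intro prob_space_uniform_measure) simp_all

lemma sets_skew_space [simp]: "sets skew_space = sets borel"
  by (simp add: skew_space_def)

lemma space_skew_space [simp]: "space skew_space = UNIV"
  by (simp add: skew_space_def)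

lemma emeasure_skew_space:
  "X \<in> sets borel \<Longrightarrow> emeasure skew_space X = emeasure lborel (X \<inter> {0..<real q}) / real q"
  by (simp add: skew_space_def emeasure_uniform_measure Int_commute)

lemma mps_skew_space: "mps skew_space skew"
  unfolding mps_def mp_map_def
proof (intro conjI allI ballI)
  show "prob_space skew_space"
    by (rule prob_space_skew_space)
  fix n
  show "skew n \<in> skew_space \<rightarrow>\<^sub>M skew_space"
    by (subst measurable_cong_sets[OF sets_skew_space sets_skew_space]) (rule skew_measurable)
  fix X assume "X \<in> sets skew_space"
  then have X: "X \<in> sets borel"
    by simp
  have "skew n -` X \<in> sets borel"
    using measurable_sets[OF skew_measurable X] by simp
  then have "emeasure skew_space (skew n -` X \<inter> space skew_space)
      = emeasure lborel ({u. skew n u \<in> X} \<inter> {0..<real q}) / real q"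
    by (simp add: emeasure_skew_space vimage_def)
  also have "\<dots> = emeasure skew_space X"
    by (simp add: emeasure_skew_vimage[OF X] emeasure_skew_space[OF X])
  finally show "emeasure skew_space (skew n -` X \<inter> space skew_space) = emeasure skew_space X" .
qed (simp_all add: skew_0 skew_add)

lemma cylinder_eq_floor_cells: "cylinder D = {u. \<lfloor>1 * u\<rfloor> \<in> int ` {k \<in> {0..<q}. e k \<in> D}}"
proof (rule Set.set_eqI)
  fix u :: real
  have "u \<in> cylinder D \<longleftrightarrow> \<lfloor>u\<rfloor> \<in> {0..<int q} \<and> e (nat \<lfloor>u\<rfloor>) \<in> D"
    by (simp only: cylinder_def mem_Collect_eq in_range_iff_floor)
  also have "\<dots> \<longleftrightarrow> \<lfloor>u\<rfloor> \<in> int ` {k \<in> {0..<q}. e k \<in> D}"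
    by (auto simp: nat_less_iff intro!: image_eqI[where x = "nat \<lfloor>u\<rfloor>"]) (metis of_nat_0_le_iff zero_le_floor)
  finally show "u \<in> cylinder D \<longleftrightarrow> u \<in> {u. \<lfloor>1 * u\<rfloor> \<in> int ` {k \<in> {0..<q}. e k \<in> D}}"
    by simp
qed

lemma cylinder_sets: "cylinder D \<in> sets borel"
  unfolding cylinder_eq_floor_cells by (rule floor_cells_sets)

lemma measure_skew_space:
  "X \<in> sets borel \<Longrightarrow> measure skew_space X = measure lborel (X \<inter> {0..<real q}) / real q"
  using q_pos by (simp add: skew_space_def Int_commute)

lemma card_cylinder_indices:
  assumes "D \<subseteq> {xs. length xs = Suc N}"
  shows "card (int ` {k \<in> {0..<q}. e k \<in> D}) = card D"
proof -
  have "D \<subseteq> e ` {0..<q}"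
    using assms e_bij by (simp add: bij_betw_def)
  then have "e ` {k \<in> {0..<q}. e k \<in> D} = D"
    by blast
  then have "bij_betw e {k \<in> {0..<q}. e k \<in> D} D"
    by (intro bij_betw_subset[OF e_bij]) auto
  then show ?thesis
    by (simp add: card_image bij_betw_same_card)
qed

lemma emeasure_cylinder:
  assumes "D \<subseteq> {xs. length xs = Suc N}"
  shows "emeasure lborel (cylinder D) = card D"
proof -
  have "emeasure lborel (cylinder D) = ennreal (card (int ` {k \<in> {0..<q}. e k \<in> D}) / 1)"
    unfolding cylinder_eq_floor_cells by (rule emeasure_floor_cells) simp_all
  then show ?thesis
    using card_cylinder_indices[OF assms] by (simp add: ennreal_of_nat_eq_real_of_nat)
qed

text \<open>On \<open>cylinder ((#) 0 ` B)\<close> the leading coordinate vanishes, which turns the right shift of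
  \<open>cocycle_mult_X\<close> into the shift \<open>shiftv\<close> of the forbidden pattern.\<close>

lemma cocycle_vanishes_on_returns:
  assumes free: "pattern_free N B" and B_len: "\<forall>v\<in>B. length v = N"
    and returns: "u \<in> cylinder ((#) 0 ` B)" "skew n u \<in> cylinder ((#) 0 ` B)"
      "skew ([:0, 1:] * n) u \<in> cylinder ((#) 0 ` B)"
  shows "cocycle p N u n = replicate (Suc N) 0"
proof -
  obtain y where u: "u \<in> {0..<real q}" and y: "e (nat \<lfloor>u\<rfloor>) = 0 # y" "y \<in> B"
    using returns(1) by (auto simp: cylinder_def)
  obtain a v where cocycle: "cocycle p N u n = a # v" and v: "length v = N"
    using length_cocycle[of p N u n] by (metis length_Suc_conv)
  have "e (nat \<lfloor>skew n u\<rfloor>) = a # vadd y v"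
    by (simp add: skew_in_range(3)[OF u] y cocycle vadd_Cons)
  then have a: "a = 0" and "vadd y v \<in> B"
    using returns(2) by (auto simp: cylinder_def)
  moreover have "e (nat \<lfloor>skew ([:0, 1:] * n) u\<rfloor>)
      = pairing (Polynomial.monom 1 (Suc N) * n) (digits p u) # vadd y (shiftv v)"
    by (simp only: skew_in_range(3)[OF u] y cocycle a cocycle_mult_X vadd_Cons butlast_Cons_0 add_0)
  then have "vadd y (shiftv v) \<in> B"
    using returns(3) by (auto simp: cylinder_def)
  ultimately have "v = replicate N 0"
    using free y(2) B_len v unfolding pattern_free_def by blast
  then show ?thesis
    by (simp add: cocycle a)
qed

lemma measure_skew_space_cylinder:
  assumes "D \<subseteq> {xs. length xs = Suc N}"
  shows "measure skew_space (cylinder D) = card D / q"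
proof -
  have "cylinder D \<inter> {0..<real q} = cylinder D"
    by (auto simp: cylinder_def)
  moreover have "measure lborel (cylinder D) = card D"
    using emeasure_cylinder[OF assms] by (simp add: measure_def)
  ultimately show ?thesis
    by (simp add: measure_skew_space cylinder_sets)
qed

end

locale faithful_digit_skew_product = digit_skew_product p N q e
  for p N q :: nat and e :: "nat \<Rightarrow> 'a::idom list" +
  assumes of_int_inj: "inj_on (of_int :: int \<Rightarrow> 'a) {0..<int p}"
begin

lemma emeasure_returns_le:
  assumes free: "pattern_free N B" and B_len: "\<forall>v\<in>B. length v = N" and n: "n \<noteq> 0"
  defines "A \<equiv> cylinder ((#) 0 ` B)"
  shows "emeasure lborel (A \<inter> skew n -` A \<inter> skew ([:0, 1:] * n) -` A) \<le> ennreal (card B / real p ^ Suc N)"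
proof -
  define K where "K = int ` {k \<in> {0..<q}. e k \<in> (#) 0 ` B}"
  have "(#) 0 ` B \<subseteq> {xs. length xs = Suc N}" "card ((#) 0 ` B) = card B"
    using B_len by (auto simp: card_image)
  then have K: "finite K" "card K = card B"
    using card_cylinder_indices by (simp_all add: K_def)
  have vanish: "\<lfloor>u\<rfloor> \<in> K \<and> (\<forall>j<Suc N. pairing (Polynomial.monom 1 j * n) (digits p u) = 0)"
    if "u \<in> A \<inter> skew n -` A \<inter> skew ([:0, 1:] * n) -` A" for u
  proof -
    have returns: "u \<in> A" "skew n u \<in> A" "skew ([:0, 1:] * n) u \<in> A"
      using that by simp_all
    have "\<lfloor>u\<rfloor> \<in> K"
      using returns(1) by (simp add: A_def K_def cylinder_eq_floor_cells)
    moreover have "cocycle p N u n = replicate (Suc N) 0"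
      by (rule cocycle_vanishes_on_returns[OF free B_len returns[unfolded A_def]])
    ultimately show ?thesis
      using cocycle_eq_0_imp by blast
  qed
  have "A \<inter> skew n -` A \<inter> skew ([:0, 1:] * n) -` A
      \<subseteq> {u. \<lfloor>u\<rfloor> \<in> K \<and> (\<forall>j<Suc N. pairing (Polynomial.monom 1 j * n) (digits p u) = 0)}"
  proof
    fix u assume "u \<in> A \<inter> skew n -` A \<inter> skew ([:0, 1:] * n) -` A"
    then show "u \<in> {u. \<lfloor>u\<rfloor> \<in> K \<and> (\<forall>j<Suc N. pairing (Polynomial.monom 1 j * n) (digits p u) = 0)}"
      unfolding mem_Collect_eq by (rule vanish)
  qed
  moreover have "p > 0"
    using p_gt_1 by simp
  ultimately have "emeasure lborel (A \<inter> skew n -` A \<inter> skew ([:0, 1:] * n) -` A)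
      \<le> ennreal (card K / real p ^ Suc N)"
    using emeasure_vanishing_pairings_le[OF _ of_int_inj n K(1)] by blast
  then show ?thesis
    by (simp only: K(2))
qed

end

lemma inj_on_of_int_mod_ring: "inj_on (of_int :: int \<Rightarrow> 'p::nontriv mod_ring) {0..<int CARD('p)}"
  by (auto simp: inj_on_def of_int_eq_iff_cong_CHAR intro: cong_less_imp_eq_int)

lemma ex_skew_product_returns_le:
  fixes B :: "'p::prime_card mod_ring list set"
  assumes B_len: "\<forall>v\<in>B. length v = N" and B_free: "pattern_free N B"
  defines "q \<equiv> CARD('p) ^ Suc N"
  shows "\<exists>(L :: real measure) (T :: 'p mod_ring poly \<Rightarrow> real \<Rightarrow> real) A.
    mps L T \<and> A \<in> sets L \<and> measure L A = card B / q \<and>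
    (\<forall>n. n \<noteq> 0 \<longrightarrow>
      measure L (A \<inter> (T n -` A \<inter> space L) \<inter> (T ([:0, 1:] * n) -` A \<inter> space L)) \<le> measure L A / q)"
proof -
  define p where "p = CARD('p)"
  define G where "G = {xs :: 'p mod_ring list. length xs = Suc N}"
  have G: "finite G" "card G = q"
    using finite_lists_length_eq[of "UNIV :: 'p mod_ring set" "Suc N"]
      card_lists_length_eq[of "UNIV :: 'p mod_ring set" "Suc N"]
    by (simp_all add: G_def q_def)
  obtain e where e: "bij_betw e {0..<q} G"
    using ex_bij_betw_nat_finite[OF G(1)] G(2) by metis
  interpret faithful_digit_skew_product p N q e
    using e nontriv[where 'a = 'p] inj_on_of_int_mod_ring by unfold_locales (simp_all add: p_def G_def)
  define A where "A = cylinder ((#) 0 ` B)"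
  have "(#) 0 ` B \<subseteq> {xs. length xs = Suc N}" "card ((#) 0 ` B) = card B"
    using B_len by (auto simp: card_image)
  then have A: "A \<in> sets skew_space" "measure skew_space A = card B / q"
    by (simp_all add: A_def cylinder_sets measure_skew_space_cylinder)
  have "measure skew_space (A \<inter> skew n -` A \<inter> skew ([:0, 1:] * n) -` A) \<le> measure skew_space A / q"
    if "n \<noteq> 0" for n
  proof -
    let ?R = "A \<inter> skew n -` A \<inter> skew ([:0, 1:] * n) -` A"
    have R_sets: "?R \<in> sets borel"
      using A(1) measurable_sets[OF skew_measurable] by auto
    have R_range: "?R \<inter> {0..<real q} = ?R"
      by (auto simp: A_def cylinder_def)
    have "measure lborel ?R \<le> card B / q"
      using emeasure_returns_le[OF B_free B_len that] unfolding measure_def A_def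
      by (intro enn2real_leI) (simp_all add: p_def q_def)
    then show ?thesis
      unfolding A(2) measure_skew_space[OF R_sets] R_range by (rule divide_right_mono) simp
  qed
  then show ?thesis
    using A by (intro exI[of _ skew_space] exI[of _ skew] exI[of _ A]) (simp add: mps_skew_space)
qed

lemma return_bound_arith:
  fixes p b :: real
  assumes p: "p > 1" and b: "p powr (real N / 2 + 1) < b"
  defines "\<mu> \<equiv> b / p ^ Suc N"
  shows "\<mu> > 0"
    and "\<mu> / p ^ Suc N \<le> (p powr (real N / 2 + 1) / b) ^ 2 * \<mu> ^ 3"
    and "(p powr (real N / 2 + 1) / b) ^ 2 * \<mu> ^ 3 < \<mu> ^ 3"
proof -
  have b0: "b > 0"
    using b p by (smt (verit) powr_gt_zero)
  show \<mu>: "\<mu> > 0"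
    using b0 p by (simp add: \<mu>_def)
  have "(p powr (real N / 2 + 1)) ^ 2 = p powr real (Suc (Suc N))"
    using p by (simp add: powr_power algebra_simps)
  also have "\<dots> = p * p ^ Suc N"
    using p by (subst powr_realpow) simp_all
  finally have eq: "(p powr (real N / 2 + 1) / b) ^ 2 * \<mu> ^ 3 = p * \<mu> / p ^ Suc N"
    using p b0 by (simp add: \<mu>_def power_divide power2_eq_square power3_eq_cube)
  have "\<mu> \<le> p * \<mu>"
    using mult_right_mono[of 1 p \<mu>] p \<mu> by simp
  then have "\<mu> / p ^ Suc N \<le> p * \<mu> / p ^ Suc N"
    by (rule divide_right_mono) (use p in simp)
  then show "\<mu> / p ^ Suc N \<le> (p powr (real N / 2 + 1) / b) ^ 2 * \<mu> ^ 3"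
    by (simp only: eq)
  have "0 < p powr (real N / 2 + 1) / b" "p powr (real N / 2 + 1) / b < 1"
    using p b b0 by simp_all
  then have "(p powr (real N / 2 + 1) / b) ^ 2 < 1"
    by (simp add: power_less_one_iff)
  then show "(p powr (real N / 2 + 1) / b) ^ 2 * \<mu> ^ 3 < \<mu> ^ 3"
    using \<mu> by simp
qed

theorem proposition11p9:
  fixes N :: nat
    and B :: "('p::prime_card mod_ring) list set"
  assumes "\<forall>v \<in> B. length v = N"
    and "real (card B) > real CARD('p) powr (real N / 2 + 1)"
    and "pattern_free N B"
  shows "\<exists>(M :: (nat \<Rightarrow> real) measure) (T :: 'p mod_ring poly \<Rightarrow> (nat \<Rightarrow> real) \<Rightarrow> (nat \<Rightarrow> real)) A.
           mps M T \<and> A \<in> sets M \<and> measure M A > 0 \<and>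
           (\<forall>n. n \<noteq> 0 \<longrightarrow>
              measure M (A \<inter> (T n -` A \<inter> space M) \<inter> (T ([:0, 1:] * n) -` A \<inter> space M))
                \<le> (real CARD('p) powr (real N / 2 + 1) / real (card B)) ^ 2 * measure M A ^ 3)
           \<and> (real CARD('p) powr (real N / 2 + 1) / real (card B)) ^ 2 * measure M A ^ 3 < measure M A ^ 3"
proof -
  define q where "q = CARD('p) ^ Suc N"
  obtain L :: "real measure" and T :: "'p mod_ring poly \<Rightarrow> real \<Rightarrow> real" and A
    where L: "mps L T" "A \<in> sets L" and measure_A: "measure L A = card B / q"
      and returns: "\<And>n. n \<noteq> 0 \<Longrightarrow>
        measure L (A \<inter> (T n -` A \<inter> space L) \<inter> (T ([:0, 1:] * n) -` A \<inter> space L)) \<le> measure L A / q"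
    using ex_skew_product_returns_le[OF assms(1,3)] unfolding q_def by blast
  define \<mu> where "\<mu> = measure L A"
  define c where "c = (real CARD('p) powr (real N / 2 + 1) / real (card B)) ^ 2"
  have "real CARD('p) > 1"
    using nontriv[where 'a = 'p] by simp
  from return_bound_arith[OF this assms(2)]
  have bounds: "\<mu> > 0" "\<mu> / q \<le> c * \<mu> ^ 3" "c * \<mu> ^ 3 < \<mu> ^ 3"
    by (simp_all add: \<mu>_def measure_A c_def q_def)
  define f :: "real \<Rightarrow> nat \<Rightarrow> real" where "f u = (\<lambda>_. u)" for u
  have f: "inj f"
    by (rule injI) (metis f_def)
  show ?thesis
    using mps_embed_measure[OF L(1) f] in_sets_embed_measure[OF L(2), of f] returns bounds
    by (intro exI[of _ "embed_measure L f"] exI[of _ "\<lambda>n y. f (T n (the_inv f y))"] exI[of _ "f ` A"])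
      (auto simp: measure_embed_measure_image[OF f L(2)] measure_embed_measure_returns[OF L(1) f L(2)]
        \<mu>_def c_def intro: order.trans)
qed

end
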